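(* Let $\mathcal{B}=(T,\bowtie,\ell)$ be a homogeneous block with $\ell\equiv 1$, and let $c:T\to\{1,\dots,k\}$ be a minimal proper vertex coloring of the conflict graph $(T,\bowtie)$ (so $k$ is its chromatic number), produced by any correct minimal vertex coloring algorithm. Then $\mathcal S=\mathrm{LevelSchedule}(c^{-1}(1),\dots,c^{-1}(k))$ is an optimal schedule of $\mathcal{B}$, i.e., $\mathcal S$ is valid and $\mathrm{Lt}_{\ell}(\mathcal S)=\mathrm{MinLt}_{\ell}(\mathcal{B})$.
   Context: A block consists of a finite set $T$ of transactions, a symmetric irreflexive conflict relation $\bowtie$, and a length function $\ell:T\to\mathbb{N}_{>0}$. A schedule is a set $\mathcal S\subseteq T\times T$ with $(T,\mathcal S)$ acyclic; it is valid if every conflicting pair is joined by a directed path in $(T,\mathcal S)$ in one direction or the other. $\mathrm{Lt}_\ell(\mathcal S)$ is the maximum over directed simple paths $P$ (including single vertices) of $\sum_{v\in P}\ell(v)$; $\mathrm{MinLt}_\ell(\mathcal{B})$ is its minimum over valid schedules. $\mathrm{LevelSchedule}(B_1,\dots,B_k)$ for an ordered partition of $T$ into conflict-free sets: set $B_0=\emptyset$, $\mathcal S=\emptyset$; for $i=1,\dots,k$ and, for each $i$, for $j=i-1,\dots,0$ (decreasing): let $E=\{(u,v)\in B_j\times B_i: u\bowtie v\}$, let $P$ be the set of pairs $(x,y)$ with a directed path from $x$ to $y$ in the current $(T,\mathcal S)$, and set $\mathcal S\leftarrow\mathcal S\cup(E\setminus P)$; output $\mathcal S$. *)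

theory Defs
  imports Main
begin

definition is_block :: "'a set \<Rightarrow> ('a \<Rightarrow> 'a \<Rightarrow> bool) \<Rightarrow> ('a \<Rightarrow> nat) \<Rightarrow> bool" where
  "is_block T conf len \<longleftrightarrow> finite T \<and> (\<forall>x. \<not> conf x x) \<and> (\<forall>x y. conf x y \<longrightarrow> conf y x)
     \<and> (\<forall>t\<in>T. len t > 0)"

definition is_schedule :: "'a set \<Rightarrow> ('a \<times> 'a) set \<Rightarrow> bool" where
  "is_schedule T S \<longleftrightarrow> S \<subseteq> T \<times> T \<and> acyclic S"

definition valid_schedule :: "'a set \<Rightarrow> ('a \<Rightarrow> 'a \<Rightarrow> bool) \<Rightarrow> ('a \<times> 'a) set \<Rightarrow> bool" where
  "valid_schedule T conf S \<longleftrightarrow> is_schedule T S \<and>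
     (\<forall>u\<in>T. \<forall>v\<in>T. conf u v \<longrightarrow> (u, v) \<in> S\<^sup>+ \<or> (v, u) \<in> S\<^sup>+)"

definition is_simple_path :: "'a set \<Rightarrow> ('a \<times> 'a) set \<Rightarrow> 'a list \<Rightarrow> bool" where
  "is_simple_path T S xs \<longleftrightarrow> xs \<noteq> [] \<and> distinct xs \<and> set xs \<subseteq> T \<and>
     (\<forall>i. Suc i < length xs \<longrightarrow> (xs ! i, xs ! Suc i) \<in> S)"

definition Lt :: "'a set \<Rightarrow> ('a \<Rightarrow> nat) \<Rightarrow> ('a \<times> 'a) set \<Rightarrow> nat" where
  "Lt T len S = Max {sum_list (map len xs) | xs. is_simple_path T S xs}"

definition MinLt :: "'a set \<Rightarrow> ('a \<Rightarrow> 'a \<Rightarrow> bool) \<Rightarrow> ('a \<Rightarrow> nat) \<Rightarrow> nat" where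
  "MinLt T conf len = Min {Lt T len S | S. valid_schedule T conf S}"

text \<open>LevelSchedule(B_1,...,B_k) for the list Bs = [B_1,...,B_k]; B_0 = {}.\<close>
definition level_set :: "'a set list \<Rightarrow> nat \<Rightarrow> 'a set" where
  "level_set Bs j = (if j = 0 then {} else Bs ! (j - 1))"

definition level_inner :: "('a \<Rightarrow> 'a \<Rightarrow> bool) \<Rightarrow> 'a set list \<Rightarrow> nat \<Rightarrow> ('a \<times> 'a) set \<Rightarrow> ('a \<times> 'a) set" where
  "level_inner conf Bs i S0 = foldl (\<lambda>S j. S \<union>
      ({(u, v). u \<in> level_set Bs j \<and> v \<in> level_set Bs i \<and> conf u v} - S\<^sup>+))
      S0 (rev [0..<i])"

definition LevelSchedule :: "('a \<Rightarrow> 'a \<Rightarrow> bool) \<Rightarrow> 'a set list \<Rightarrow> ('a \<times> 'a) set" where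
  "LevelSchedule conf Bs = foldl (\<lambda>S i. level_inner conf Bs i S) {} [1..<length Bs + 1]"

definition proper_coloring :: "'a set \<Rightarrow> ('a \<Rightarrow> 'a \<Rightarrow> bool) \<Rightarrow> ('a \<Rightarrow> nat) \<Rightarrow> nat \<Rightarrow> bool" where
  "proper_coloring T conf c k \<longleftrightarrow> (\<forall>t\<in>T. c t \<in> {1..k}) \<and>
     (\<forall>u\<in>T. \<forall>v\<in>T. conf u v \<longrightarrow> c u \<noteq> c v)"

definition chromatic_number :: "'a set \<Rightarrow> ('a \<Rightarrow> 'a \<Rightarrow> bool) \<Rightarrow> nat" where
  "chromatic_number T conf = (LEAST k. \<exists>c. proper_coloring T conf c k)"

end

theory Submission
  imports Defs
begin

text \<open>With unit lengths, Lt S is the number of vertices on a longest path. For any valid S,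
  numbering each transaction by the number of vertices of a longest path ending in it is a proper
  colouring with Lt S colours, since conflicting transactions are comparable in S and the number
  strictly increases along S; hence the chromatic number is a lower bound for every valid schedule.
  Conversely, the level schedule of the colour classes of a minimal colouring only adds edges from
  lower to higher colours, so it is acyclic, every path in it has strictly increasing colours and
  thus at most k vertices, and every conflicting pair becomes ordered.\<close>

lemma foldl_invariant:
  assumes "\<And>S x. x \<in> set xs \<Longrightarrow> P S \<Longrightarrow> P (f S x)" "P S0"
  shows "P (foldl f S0 xs)"
  using assms by (induction xs arbitrary: S0) auto

lemma foldl_invariant_established:
  assumes "\<And>S x. x \<in> set xs \<Longrightarrow> P S \<Longrightarrow> P (f S x)" "a \<in> set xs" "\<And>S. P (f S a)"
  shows "P (foldl f S0 xs)"
  using assms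
proof (induction xs arbitrary: S0)
  case Nil
  then show ?case by simp
next
  case (Cons x xs)
  show ?case
  proof (cases "x = a")
    case True
    then show ?thesis using foldl_invariant[of xs P f "f S0 x"] Cons.prems by simp
  next
    case False
    then show ?thesis using Cons.IH[of "f S0 x"] Cons.prems by simp
  qed
qed

lemma simple_path_singleton: "v \<in> T \<Longrightarrow> is_simple_path T S [v]"
  unfolding is_simple_path_def by simp

lemma simple_path_length_le_card:
  assumes "finite T" "is_simple_path T S xs"
  shows "length xs \<le> card T"
proof -
  have "length xs = card (set xs)"
    using assms(2) distinct_card unfolding is_simple_path_def by metis
  also have "\<dots> \<le> card T"
    using assms card_mono unfolding is_simple_path_def by metis
  finally show ?thesis .
qed

lemma finite_simple_path_lengths:
  "finite T \<Longrightarrow> finite {length xs | xs. is_simple_path T S xs \<and> P xs}"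
  by (rule finite_nat_set_iff_bounded_le[THEN iffD2]) (use simple_path_length_le_card in blast)

lemma simple_path_rtrancl:
  assumes "is_simple_path T S xs" "i + d < length xs"
  shows "(xs ! i, xs ! (i + d)) \<in> S\<^sup>*"
  using assms(2)
proof (induction d)
  case 0
  then show ?case by simp
next
  case (Suc d)
  then have "(xs ! i, xs ! (i + d)) \<in> S\<^sup>*" by simp
  moreover have "(xs ! (i + d), xs ! Suc (i + d)) \<in> S"
    using assms(1) Suc.prems unfolding is_simple_path_def by auto
  ultimately show ?case by simp
qed

lemma simple_path_reaches_last:
  assumes "is_simple_path T S xs" "x \<in> set xs"
  shows "(x, last xs) \<in> S\<^sup>*"
proof -
  obtain i where i: "i < length xs" "xs ! i = x"
    using assms(2) by (meson in_set_conv_nth)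
  have "xs \<noteq> []" using assms(1) unfolding is_simple_path_def by simp
  then show ?thesis
    using simple_path_rtrancl[OF assms(1), of i "length xs - 1 - i"] i by (simp add: last_conv_nth)
qed

lemma simple_path_snoc:
  assumes "acyclic S" "(u, v) \<in> S" "v \<in> T" "is_simple_path T S xs" "last xs = u"
  shows "is_simple_path T S (xs @ [v])"
proof -
  have ne: "xs \<noteq> []" using assms(4) unfolding is_simple_path_def by simp
  have "v \<notin> set xs"
  proof
    assume "v \<in> set xs"
    then have "(v, u) \<in> S\<^sup>*" using simple_path_reaches_last[OF assms(4)] assms(5) by blast
    with assms(2) have "(v, v) \<in> S\<^sup>+" by simp
    with assms(1) show False unfolding acyclic_def by blast
  qed
  moreover have "((xs @ [v]) ! i, (xs @ [v]) ! Suc i) \<in> S" if "Suc i < length (xs @ [v])" for i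
  proof (cases "Suc i < length xs")
    case True
    then show ?thesis using assms(4) unfolding is_simple_path_def by (simp add: nth_append)
  next
    case False
    then have "i = length xs - 1" "Suc i = length xs" using that by simp_all
    then show ?thesis using assms(2,5) ne by (simp add: nth_append last_conv_nth)
  qed
  ultimately show ?thesis using assms(3,4) unfolding is_simple_path_def by auto
qed

lemma simple_path_measure_increase:
  assumes "is_simple_path T S xs" "S \<subseteq> measure f" "i < length xs"
  shows "f (xs ! 0) + i \<le> f (xs ! i)"
  using assms(3)
proof (induction i)
  case 0
  then show ?case by simp
next
  case (Suc i)
  have "(xs ! i, xs ! Suc i) \<in> S" using assms(1) Suc.prems unfolding is_simple_path_def by auto
  then have "f (xs ! i) < f (xs ! Suc i)" using assms(2) by auto
  then show ?case using Suc by simp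
qed

lemma simple_path_length_le_range:
  assumes "is_simple_path T S xs" "S \<subseteq> measure f" "\<forall>t\<in>T. f t \<in> {1..k}"
  shows "length xs \<le> k"
proof -
  have ne: "xs \<noteq> []" and sub: "set xs \<subseteq> T" using assms(1) unfolding is_simple_path_def by auto
  then have "xs ! 0 \<in> T" "xs ! (length xs - 1) \<in> T" by auto
  then have "1 \<le> f (xs ! 0)" "f (xs ! (length xs - 1)) \<le> k" using assms(3) by auto
  moreover have "f (xs ! 0) + (length xs - 1) \<le> f (xs ! (length xs - 1))"
    using simple_path_measure_increase[OF assms(1,2)] ne by simp
  ultimately show ?thesis using ne by linarith
qed

lemma sum_list_unit_len:
  "\<forall>t\<in>T. len t = (1::nat) \<Longrightarrow> set xs \<subseteq> T \<Longrightarrow> sum_list (map len xs) = length xs"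
  by (induction xs) auto

lemma Lt_unit_len:
  assumes "\<forall>t\<in>T. len t = 1"
  shows "Lt T len S = Max {length xs | xs. is_simple_path T S xs}"
proof -
  have "sum_list (map len xs) = length xs" if "is_simple_path T S xs" for xs
    using sum_list_unit_len[OF assms] that unfolding is_simple_path_def by blast
  then have "{sum_list (map len xs) | xs. is_simple_path T S xs} = {length xs | xs. is_simple_path T S xs}"
    by force
  then show ?thesis unfolding Lt_def by simp
qed

lemma length_le_Lt:
  assumes "finite T" "\<forall>t\<in>T. len t = 1" "is_simple_path T S xs"
  shows "length xs \<le> Lt T len S"
  unfolding Lt_unit_len[OF assms(2)]
  using finite_simple_path_lengths[OF assms(1), of S "\<lambda>_. True"] assms(3) by (auto intro: Max_ge)

lemma Lt_le_path_bound:
  assumes "\<forall>t\<in>T. len t = 1" "T \<noteq> {}" "\<And>xs. is_simple_path T S xs \<Longrightarrow> length xs \<le> n"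
  shows "Lt T len S \<le> n"
proof -
  let ?L = "{length xs | xs. is_simple_path T S xs}"
  have bounded: "\<forall>l\<in>?L. l \<le> n" using assms(3) by blast
  then have "finite ?L" by (rule finite_nat_set_iff_bounded_le[THEN iffD2, OF exI])
  moreover obtain v where "v \<in> T" using assms(2) by blast
  then have "?L \<noteq> {}" using simple_path_singleton[of v T S] by blast
  ultimately show ?thesis unfolding Lt_unit_len[OF assms(1)] using bounded by simp
qed

lemma MinLt_eqI:
  assumes "finite T" "valid_schedule T conf S"
    "\<And>S'. valid_schedule T conf S' \<Longrightarrow> Lt T len S \<le> Lt T len S'"
  shows "MinLt T conf len = Lt T len S"
  unfolding MinLt_def
proof (rule Min_eqI)
  have "{S. valid_schedule T conf S} \<subseteq> Pow (T \<times> T)"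
    unfolding valid_schedule_def is_schedule_def by blast
  then have "finite {S. valid_schedule T conf S}"
    using assms(1) by (auto intro: finite_subset)
  then show "finite {Lt T len S | S. valid_schedule T conf S}"
    by (simp add: setcompr_eq_image)
qed (use assms(2,3) in blast)+

definition path_depth :: "'a set \<Rightarrow> ('a \<times> 'a) set \<Rightarrow> 'a \<Rightarrow> nat" where
  "path_depth T S v = Max {length xs | xs. is_simple_path T S xs \<and> last xs = v}"

lemma path_depth_ge:
  assumes "finite T" "is_simple_path T S xs" "last xs = v"
  shows "length xs \<le> path_depth T S v"
  unfolding path_depth_def
  using Max_ge[OF finite_simple_path_lengths[OF assms(1), of S "\<lambda>xs. last xs = v"]] assms(2,3)
  by blast

lemma path_depth_attained:
  assumes "finite T" "v \<in> T"
  obtains xs where "is_simple_path T S xs" "last xs = v" "length xs = path_depth T S v"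
proof -
  let ?D = "{length xs | xs. is_simple_path T S xs \<and> last xs = v}"
  have "[v] \<in> {xs. is_simple_path T S xs \<and> last xs = v}"
    using simple_path_singleton[OF assms(2)] by simp
  then have "?D \<noteq> {}" by blast
  then have "path_depth T S v \<in> ?D"
    unfolding path_depth_def
    by (rule Max_in[OF finite_simple_path_lengths[OF assms(1), of S "\<lambda>xs. last xs = v"]])
  then show ?thesis using that by force
qed

lemma path_depth_increasing:
  assumes "finite T" "S \<subseteq> T \<times> T" "acyclic S" "(u, v) \<in> S\<^sup>+"
  shows "path_depth T S u < path_depth T S v"
proof -
  have edge: "path_depth T S x < path_depth T S y" if "(x, y) \<in> S" for x y
  proof -
    have "x \<in> T" "y \<in> T" using that assms(2) by auto
    then obtain xs where xs: "is_simple_path T S xs" "last xs = x" "length xs = path_depth T S x"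
      using path_depth_attained[OF assms(1)] by metis
    have "is_simple_path T S (xs @ [y])"
      using simple_path_snoc[OF assms(3) that \<open>y \<in> T\<close> xs(1,2)] .
    from path_depth_ge[OF assms(1) this] xs(3) show ?thesis by simp
  qed
  from assms(4) show ?thesis
    by (induction rule: trancl_induct) (use edge less_trans in blast)+
qed

lemma proper_coloring_path_depth:
  assumes "finite T" "\<forall>t\<in>T. len t = 1" "valid_schedule T conf S"
  shows "proper_coloring T conf (path_depth T S) (Lt T len S)"
  unfolding proper_coloring_def
proof (intro conjI ballI impI)
  fix t
  assume "t \<in> T"
  then obtain xs where "is_simple_path T S xs" "length xs = path_depth T S t"
    using path_depth_attained[OF assms(1)] by metis
  moreover have "0 < length xs" using \<open>is_simple_path T S xs\<close> unfolding is_simple_path_def by simp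
  ultimately show "path_depth T S t \<in> {1..Lt T len S}"
    using length_le_Lt[OF assms(1,2) \<open>is_simple_path T S xs\<close>] by auto
next
  fix u v
  assume "u \<in> T" "v \<in> T" "conf u v"
  then have "(u, v) \<in> S\<^sup>+ \<or> (v, u) \<in> S\<^sup>+"
    using assms(3) unfolding valid_schedule_def by blast
  moreover have "S \<subseteq> T \<times> T" "acyclic S"
    using assms(3) unfolding valid_schedule_def is_schedule_def by auto
  ultimately show "path_depth T S u \<noteq> path_depth T S v"
    using path_depth_increasing[OF assms(1)] by (metis less_irrefl)
qed

lemma chromatic_number_le_Lt:
  assumes "finite T" "\<forall>t\<in>T. len t = 1" "valid_schedule T conf S"
  shows "chromatic_number T conf \<le> Lt T len S"
  unfolding chromatic_number_def using proper_coloring_path_depth[OF assms] by (blast intro: Least_le)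

lemma LevelSchedule_subset:
  "LevelSchedule conf Bs \<subseteq>
    {(u, v). \<exists>i j. j < i \<and> i \<le> length Bs \<and> u \<in> level_set Bs j \<and> v \<in> level_set Bs i}"
  (is "_ \<subseteq> ?R")
  unfolding LevelSchedule_def
proof (rule foldl_invariant)
  fix S i
  assume i: "i \<in> set [1..<length Bs + 1]" and S: "S \<subseteq> ?R"
  show "level_inner conf Bs i S \<subseteq> ?R"
    unfolding level_inner_def
  proof (rule foldl_invariant)
    fix X j
    assume "j \<in> set (rev [0..<i])" "X \<subseteq> ?R"
    moreover have "j < i" "i \<le> length Bs" using i \<open>j \<in> set (rev [0..<i])\<close> by auto
    then have "{(a, b). a \<in> level_set Bs j \<and> b \<in> level_set Bs i \<and> conf a b} \<subseteq> ?R" by blast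
    ultimately show "X \<union> ({(a, b). a \<in> level_set Bs j \<and> b \<in> level_set Bs i \<and> conf a b} - X\<^sup>+) \<subseteq> ?R"
      by blast
  qed (rule S)
qed simp

lemma level_inner_mono: "S \<subseteq> level_inner conf Bs i S"
  unfolding level_inner_def by (rule foldl_invariant) auto

lemma LevelSchedule_orders_conflicts:
  assumes "j < i" "i \<le> length Bs" "u \<in> level_set Bs j" "v \<in> level_set Bs i" "conf u v"
  shows "(u, v) \<in> (LevelSchedule conf Bs)\<^sup>+"
  unfolding LevelSchedule_def
proof (rule foldl_invariant_established[where a = i])
  show "i \<in> set [1..<length Bs + 1]" using assms(1,2) by auto
  show "(u, v) \<in> (level_inner conf Bs i' S)\<^sup>+" if "(u, v) \<in> S\<^sup>+" for S i'
    using trancl_mono[OF that level_inner_mono] .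
  show "(u, v) \<in> (level_inner conf Bs i S)\<^sup>+" for S
    unfolding level_inner_def
  proof (rule foldl_invariant_established[where a = j])
    show "j \<in> set (rev [0..<i])" using assms(1) by auto
    show "(u, v) \<in> (X \<union> ({(a, b). a \<in> level_set Bs j \<and> b \<in> level_set Bs i \<and> conf a b} - X\<^sup>+))\<^sup>+"
      for X
      using assms(3-5) by (cases "(u, v) \<in> X\<^sup>+") (auto intro: trancl_mono)
  qed (auto intro: trancl_mono)
qed

definition colour_classes :: "'a set \<Rightarrow> ('a \<Rightarrow> nat) \<Rightarrow> nat \<Rightarrow> 'a set list" where
  "colour_classes T c k = map (\<lambda>i. {t \<in> T. c t = i}) [1..<k + 1]"

lemma length_colour_classes [simp]: "length (colour_classes T c k) = k"
  unfolding colour_classes_def by simp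

lemma level_set_colour_classes:
  "j \<le> k \<Longrightarrow> level_set (colour_classes T c k) j = {t \<in> T. c t = j \<and> 0 < j}"
  unfolding level_set_def colour_classes_def by (auto simp: nth_append)

lemma colour_classes_schedule_subset:
  "LevelSchedule conf (colour_classes T c k) \<subseteq> (T \<times> T) \<inter> measure c"
proof
  fix e
  assume "e \<in> LevelSchedule conf (colour_classes T c k)"
  then obtain u v i j where "e = (u, v)" "j < i" "i \<le> k"
    "u \<in> level_set (colour_classes T c k) j" "v \<in> level_set (colour_classes T c k) i"
    using LevelSchedule_subset by fastforce
  then show "e \<in> (T \<times> T) \<inter> measure c" by (simp add: level_set_colour_classes)
qed

lemma colour_classes_schedule_valid:
  assumes "is_block T conf len" "proper_coloring T conf c k"
  shows "valid_schedule T conf (LevelSchedule conf (colour_classes T c k))"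
    (is "valid_schedule T conf ?S")
proof -
  have ordered: "(u, v) \<in> ?S\<^sup>+" if "u \<in> T" "v \<in> T" "conf u v" "c u < c v" for u v
  proof (rule LevelSchedule_orders_conflicts[where i = "c v" and j = "c u"])
    have "c u \<in> {1..k}" "c v \<in> {1..k}" using that(1,2) assms(2) unfolding proper_coloring_def by auto
    then show "u \<in> level_set (colour_classes T c k) (c u)" "v \<in> level_set (colour_classes T c k) (c v)"
      "c v \<le> length (colour_classes T c k)"
      using that(1,2) by (simp_all add: level_set_colour_classes)
  qed (use that in simp_all)
  have "?S \<subseteq> measure c" using colour_classes_schedule_subset by blast
  then have "acyclic ?S" by (rule acyclic_subset[OF wf_acyclic[OF wf_measure]])
  moreover have "(u, v) \<in> ?S\<^sup>+ \<or> (v, u) \<in> ?S\<^sup>+" if "u \<in> T" "v \<in> T" "conf u v" for u v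
  proof -
    have "conf v u" using assms(1) that(3) unfolding is_block_def by blast
    moreover have "c u \<noteq> c v" using assms(2) that unfolding proper_coloring_def by blast
    ultimately show ?thesis using ordered[of u v] ordered[of v u] that by (cases "c u < c v") auto
  qed
  ultimately show ?thesis
    using colour_classes_schedule_subset unfolding valid_schedule_def is_schedule_def by blast
qed

theorem corollary1:
  fixes T :: "'a set" and conf :: "'a \<Rightarrow> 'a \<Rightarrow> bool" and len :: "'a \<Rightarrow> nat"
    and c :: "'a \<Rightarrow> nat" and k :: nat
  assumes "is_block T conf len"
    and "\<forall>t\<in>T. len t = 1"
    and "proper_coloring T conf c k"
    and "k = chromatic_number T conf"
  shows "valid_schedule T conf (LevelSchedule conf (map (\<lambda>i. {t \<in> T. c t = i}) [1..<k + 1]))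
    \<and> Lt T len (LevelSchedule conf (map (\<lambda>i. {t \<in> T. c t = i}) [1..<k + 1])) = MinLt T conf len"
proof -
  let ?S = "LevelSchedule conf (colour_classes T c k)"
  have fin: "finite T" using assms(1) unfolding is_block_def by simp
  have valid: "valid_schedule T conf ?S" using colour_classes_schedule_valid[OF assms(1,3)] .
  have "Lt T len ?S \<le> Lt T len S'" if "valid_schedule T conf S'" for S'
  proof (cases "T = {}")
    case True
    \<comment> \<open>Lt is then Max of the empty set, so compare the schedules themselves.\<close>
    then have "S' = ?S" using that valid unfolding valid_schedule_def is_schedule_def by blast
    then show ?thesis by simp
  next
    case False
    have "?S \<subseteq> measure c" using colour_classes_schedule_subset by blast
    moreover have "\<forall>t\<in>T. c t \<in> {1..k}" using assms(3) unfolding proper_coloring_def by blast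
    ultimately have "Lt T len ?S \<le> k"
      using Lt_le_path_bound[OF assms(2) False] simple_path_length_le_range by metis
    also have "k \<le> Lt T len S'" using chromatic_number_le_Lt[OF fin assms(2) that] assms(4) by simp
    finally show ?thesis .
  qed
  then have "MinLt T conf len = Lt T len ?S" by (rule MinLt_eqI[OF fin valid])
  with valid show ?thesis unfolding colour_classes_def by simp
qed

end
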